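(* Let $A$ be a finite nonempty subset of an abelian group $\mathbf{G}$ and let $k\geq 1$ be an integer. Then $$|A|^{2k}\le \mathsf{E}_k(A)\cdot \sigma_k(A-A),\qquad |A|^{4k}\le \mathsf{E}_{2k}(A)\cdot \mathsf{T}_k(A+A),$$ and $$|A|^{2k+4}\le \mathsf{E}_{k+2}(A)\cdot \mathsf{E}_k(A-A),\qquad |A|^{2k+4}\le \mathsf{E}_{k+2}(A)\cdot \mathsf{E}_k(A+A).$$
   Context: For finite $X\subseteq\mathbf{G}$ write $(X\circ X)(x)=|\{(a,b)\in X^2: b-a=x\}|$. For an integer $j\ge 2$, $\mathsf{E}_j(X)=\sum_{x\in\mathbf G}(X\circ X)(x)^j$, and $\mathsf{E}_1(X)=|X|^2$. $\sigma_k(X)=|\{(x_1,\dots,x_k)\in X^k: x_1+\dots+x_k=0\}|$. $\mathsf{T}_k(X)=|\{(x_1,\dots,x_k,x_1',\dots,x_k')\in X^{2k}: x_1+\dots+x_k=x_1'+\dots+x_k'\}|$. $A\pm A=\{a\pm b: a,b\in A\}$. *)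

theory Defs
  imports "HOL-Analysis.Analysis" "HOL-Library.FuncSet"
begin

definition conv_count :: "'a::ab_group_add set \<Rightarrow> 'a \<Rightarrow> nat" where
  "conv_count X x = card {(a, b). a \<in> X \<and> b \<in> X \<and> b - a = x}"

definition Energy :: "nat \<Rightarrow> 'a::ab_group_add set \<Rightarrow> nat" where
  "Energy j X = (if j = 1 then card X ^ 2
     else (\<Sum>x\<in>{b - a | a b. a \<in> X \<and> b \<in> X}. conv_count X x ^ j))"

definition sumset :: "'a::ab_group_add set \<Rightarrow> 'a set \<Rightarrow> 'a set" where
  "sumset A B = {a + b | a b. a \<in> A \<and> b \<in> B}"

definition diffset :: "'a::ab_group_add set \<Rightarrow> 'a set \<Rightarrow> 'a set" where
  "diffset A B = {a - b | a b. a \<in> A \<and> b \<in> B}"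

definition sigma_k :: "nat \<Rightarrow> 'a::ab_group_add set \<Rightarrow> nat" where
  "sigma_k k X = card {x \<in> {..<k} \<rightarrow>\<^sub>E X. (\<Sum>i<k. x i) = 0}"

definition T_k :: "nat \<Rightarrow> 'a::ab_group_add set \<Rightarrow> nat" where
  "T_k k X = card {(x, y). x \<in> {..<k} \<rightarrow>\<^sub>E X \<and> y \<in> {..<k} \<rightarrow>\<^sub>E X
                     \<and> (\<Sum>i<k. x i) = (\<Sum>i<k. y i)}"

end

theory Submission
  imports Defs
begin

text \<open>
  Each inequality is Cauchy--Schwarz for a map \<open>\<phi>\<close> from \<open>A\<^sup>n\<close> into a finite set \<open>Y\<close>:
  \<open>|A|\<^sup>2\<^sup>n \<le> |Y| \<cdot> #{(a, a'). \<phi> a = \<phi> a'}\<close>. The maps are chosen so that \<open>\<phi> a = \<phi> a'\<close> forces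
  \<open>a' - a\<close> to be a constant vector \<open>t\<close>, except on a fixed set \<open>J\<close> of coordinates where it is
  \<open>-t\<close>; swapping \<open>a\<close> and \<open>a'\<close> on \<open>J\<close> maps such pairs injectively to pairs of tuples differing
  by a constant, and there are exactly \<open>E\<^sub>n(A)\<close> of those. The maps are the cyclic differences
  \<open>(a\<^sub>i - a\<^sub>i\<^sub>+\<^sub>1)\<^sub>i\<^sub><\<^sub>k\<close> into the tuples counted by \<open>\<sigma>\<^sub>k(A - A)\<close>; the two sum vectors
  \<open>(a\<^sub>i + a\<^sub>k\<^sub>+\<^sub>i)\<^sub>i\<^sub><\<^sub>k\<close> and \<open>(a\<^sub>i\<^sub>+\<^sub>1 + a\<^sub>k\<^sub>+\<^sub>i)\<^sub>i\<^sub><\<^sub>k\<close> (indices mod \<open>k\<close>), which have equal sums, into the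
  pairs counted by \<open>T\<^sub>k(A + A)\<close>; and \<open>(a\<^sub>i \<plusminus> a\<^sub>k, a\<^sub>i \<plusminus> a\<^sub>k\<^sub>+\<^sub>1)\<^sub>i\<^sub><\<^sub>k\<close>, two tuples differing by a
  constant, into the pairs counted by \<open>E\<^sub>k(A \<plusminus> A)\<close>.
\<close>

lemma restrict_eqD: "restrict f I = restrict g I \<Longrightarrow> i \<in> I \<Longrightarrow> f i = g i"
  by (metis restrict_apply')

lemma sum_lessThan_rotate:
  fixes f :: "nat \<Rightarrow> 'a::comm_monoid_add"
  assumes "k \<ge> 1"
  shows "(\<Sum>i<k. f (Suc i mod k)) = (\<Sum>i<k. f i)"
proof -
  obtain m where k: "k = Suc m"
    using assms by (cases k) auto
  have "(\<Sum>i<Suc m. f (Suc i mod Suc m)) = (\<Sum>i<m. f (Suc i)) + f 0"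
    by simp
  also have "\<dots> = (\<Sum>i<Suc m. f i)"
    by (subst sum.lessThan_Suc_shift) (simp add: add.commute)
  finally show ?thesis
    using k by simp
qed

lemma rotation_invariant_imp_const:
  assumes "\<And>i. i < k \<Longrightarrow> g (Suc i mod k) = g i" and "i < k"
  shows "g i = g 0"
  using assms(2)
proof (induction i)
  case (Suc i)
  then have "g (Suc i) = g i"
    using assms(1)[of i] by simp
  with Suc show ?case
    by simp
qed simp

lemma finite_diffset:
  assumes "finite A" "finite B"
  shows "finite (diffset A B)"
proof -
  have "diffset A B = (\<lambda>(a, b). a - b) ` (A \<times> B)"
    by (auto simp: diffset_def)
  with assms show ?thesis
    by simp
qed

lemma finite_sumset:
  assumes "finite A" "finite B"
  shows "finite (sumset A B)"
proof -
  have "sumset A B = (\<lambda>(a, b). a + b) ` (A \<times> B)"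
    by (auto simp: sumset_def)
  with assms show ?thesis
    by simp
qed

lemma card_sq_le_card_mult_collisions:
  assumes "finite X" "finite Y" "\<phi> ` X \<subseteq> Y"
  shows "card X ^ 2 \<le> card Y * card {(x, x'). x \<in> X \<and> x' \<in> X \<and> \<phi> x = \<phi> x'}"
proof -
  define fib where "fib y = {x \<in> X. \<phi> x = y}" for y
  have "X = (\<Union>y\<in>Y. fib y)"
    using assms(3) by (auto simp: fib_def)
  moreover have "card (\<Union>y\<in>Y. fib y) = (\<Sum>y\<in>Y. card (fib y))"
    using assms(1,2) by (intro card_UN_disjoint) (auto simp: fib_def)
  ultimately have card_X: "card X = (\<Sum>y\<in>Y. card (fib y))"
    by simp
  have "{(x, x'). x \<in> X \<and> x' \<in> X \<and> \<phi> x = \<phi> x'} = (\<Union>y\<in>Y. fib y \<times> fib y)"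
    using assms(3) by (auto simp: fib_def)
  moreover have "card (\<Union>y\<in>Y. fib y \<times> fib y) = (\<Sum>y\<in>Y. card (fib y) ^ 2)"
    using assms(1,2)
    by (subst card_UN_disjoint) (auto simp: fib_def card_cartesian_product power2_eq_square)
  ultimately have card_coll:
      "card {(x, x'). x \<in> X \<and> x' \<in> X \<and> \<phi> x = \<phi> x'} = (\<Sum>y\<in>Y. card (fib y) ^ 2)"
    by simp
  have "real ((\<Sum>y\<in>Y. card (fib y)) ^ 2) \<le> real (card Y * (\<Sum>y\<in>Y. card (fib y) ^ 2))"
    using sum_squared_le_sum_of_squares[of "\<lambda>y. real (card (fib y))" Y] by (simp add: mult.commute)
  then show ?thesis
    unfolding card_X card_coll by (simp only: of_nat_le_iff)
qed

definition shift_pairs :: "nat set \<Rightarrow> nat \<Rightarrow> 'a::ab_group_add set \<Rightarrow> ((nat \<Rightarrow> 'a) \<times> (nat \<Rightarrow> 'a)) set"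
  where "shift_pairs J n A = {(a, a'). a \<in> {..<n} \<rightarrow>\<^sub>E A \<and> a' \<in> {..<n} \<rightarrow>\<^sub>E A \<and>
      (\<exists>t. \<forall>i<n. a' i - a i = (if i \<in> J then - t else t))}"

lemma finite_shift_pairs: "finite A \<Longrightarrow> finite (shift_pairs J n A)"
  by (rule finite_subset[of _ "({..<n} \<rightarrow>\<^sub>E A) \<times> ({..<n} \<rightarrow>\<^sub>E A)"])
     (auto simp: shift_pairs_def finite_PiE)

lemma card_shift_pairs_le:
  assumes "finite A" "J \<subseteq> {..<n}"
  shows "card (shift_pairs J n A) \<le> card (shift_pairs {} n A)"
proof -
  define sw where "sw = (\<lambda>(a :: nat \<Rightarrow> 'a, a'). ((\<lambda>i. if i \<in> J then a' i else a i),
                                                 (\<lambda>i. if i \<in> J then a i else a' i)))"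
  have "inj_on sw (shift_pairs J n A)"
    by (rule inj_on_inverseI[where g = sw]) (auto simp: sw_def fun_eq_iff)
  moreover have "sw ` shift_pairs J n A \<subseteq> shift_pairs {} n A"
  proof (rule image_subsetI)
    fix p
    assume "p \<in> shift_pairs J n A"
    then obtain a a' t where p: "p = (a, a')"
      and a: "a \<in> {..<n} \<rightarrow>\<^sub>E A" and a': "a' \<in> {..<n} \<rightarrow>\<^sub>E A"
      and t: "\<forall>i<n. a' i - a i = (if i \<in> J then - t else t)"
      unfolding shift_pairs_def by blast
    have "\<forall>i<n. (if i \<in> J then a i else a' i) - (if i \<in> J then a' i else a i) = t"
      using t by (auto simp: algebra_simps)
    moreover have "(\<lambda>i. if i \<in> J then a' i else a i) \<in> {..<n} \<rightarrow>\<^sub>E A"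
      and "(\<lambda>i. if i \<in> J then a i else a' i) \<in> {..<n} \<rightarrow>\<^sub>E A"
      using a a' assms(2) by (auto simp: PiE_def Pi_def extensional_def)
    ultimately show "sw p \<in> shift_pairs {} n A"
      by (auto simp: p sw_def shift_pairs_def)
  qed
  ultimately show ?thesis
    using card_inj_on_le finite_shift_pairs[OF assms(1)] by blast
qed

lemma card_shift_pairs_eq_Energy:
  fixes A :: "'a::ab_group_add set"
  assumes "finite A" "n \<ge> 1"
  shows "card (shift_pairs {} n A) = Energy n A"
proof (cases "n = 1")
  case True
  then have "shift_pairs {} n A = ({..<n} \<rightarrow>\<^sub>E A) \<times> ({..<n} \<rightarrow>\<^sub>E A)"
    by (auto simp: shift_pairs_def)
  with True assms(1) show ?thesis
    by (simp add: Energy_def card_cartesian_product card_PiE power2_eq_square)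
next
  case False
  define D where "D = {b - a | a b. a \<in> A \<and> b \<in> A}"
  define P where "P t = {(a, b). a \<in> A \<and> b \<in> A \<and> b - a = t}" for t
  define S where "S t = {(a, a'). a \<in> {..<n} \<rightarrow>\<^sub>E A \<and> a' \<in> {..<n} \<rightarrow>\<^sub>E A \<and> (\<forall>i<n. a' i - a i = t)}" for t
  have "D = (\<lambda>(a, b). b - a) ` (A \<times> A)"
    by (auto simp: D_def)
  then have fin_D: "finite D"
    using assms(1) by simp
  have "shift_pairs {} n A = (\<Union>t\<in>D. S t)"
  proof
    show "shift_pairs {} n A \<subseteq> (\<Union>t\<in>D. S t)"
    proof
      fix p
      assume "p \<in> shift_pairs {} n A"
      then obtain a a' t where "p = (a, a')" "a \<in> {..<n} \<rightarrow>\<^sub>E A" "a' \<in> {..<n} \<rightarrow>\<^sub>E A"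
        "\<forall>i<n. a' i - a i = t"
        unfolding shift_pairs_def by auto
      moreover from this assms(2) have "t \<in> D"
        unfolding D_def by (force simp: PiE_def Pi_def)
      ultimately show "p \<in> (\<Union>t\<in>D. S t)"
        by (auto simp: S_def)
    qed
  qed (auto simp: S_def shift_pairs_def)
  moreover have "finite (S t)" for t
    by (rule finite_subset[of _ "({..<n} \<rightarrow>\<^sub>E A) \<times> ({..<n} \<rightarrow>\<^sub>E A)"])
      (auto simp: S_def assms(1) intro!: finite_cartesian_product finite_PiE)
  moreover have "S s \<inter> S t = {}" if "s \<noteq> t" for s t
    using assms(2) that by (auto simp: S_def)
  moreover have "card (S t) = card (P t) ^ n" for t
  proof -
    have "bij_betw (\<lambda>w. (restrict (fst \<circ> w) {..<n}, restrict (snd \<circ> w) {..<n})) ({..<n} \<rightarrow>\<^sub>E P t) (S t)"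
    proof (rule bij_betw_byWitness[where f' = "\<lambda>(a, a'). restrict (\<lambda>i. (a i, a' i)) {..<n}"])
      show "(\<lambda>w. (restrict (fst \<circ> w) {..<n}, restrict (snd \<circ> w) {..<n})) ` ({..<n} \<rightarrow>\<^sub>E P t) \<subseteq> S t"
        by (auto simp: S_def P_def PiE_def Pi_def split: prod.splits; metis prod.collapse)
      show "(\<lambda>(a, a'). restrict (\<lambda>i. (a i, a' i)) {..<n}) ` S t \<subseteq> {..<n} \<rightarrow>\<^sub>E P t"
        by (auto simp: S_def P_def PiE_def Pi_def)
    qed (auto simp: fun_eq_iff PiE_def extensional_def S_def)
    then have "card (S t) = card ({..<n} \<rightarrow>\<^sub>E P t)"
      by (simp add: bij_betw_same_card)
    then show ?thesis
      by (simp add: card_PiE)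
  qed
  moreover have "Energy n A = (\<Sum>t\<in>D. card (P t) ^ n)"
    using False by (simp add: Energy_def D_def P_def conv_count_def)
  ultimately show ?thesis
    by (simp add: card_UN_disjoint[OF fin_D])
qed

lemma card_power_le_card_mult_Energy:
  fixes A :: "'a::ab_group_add set" and \<phi> :: "(nat \<Rightarrow> 'a) \<Rightarrow> 'b"
  assumes "finite A" "finite Y" "n \<ge> 1" "J \<subseteq> {..<n}"
    and maps: "\<phi> ` ({..<n} \<rightarrow>\<^sub>E A) \<subseteq> Y"
    and collision: "\<And>a a'. a \<in> {..<n} \<rightarrow>\<^sub>E A \<Longrightarrow> a' \<in> {..<n} \<rightarrow>\<^sub>E A \<Longrightarrow> \<phi> a = \<phi> a' \<Longrightarrow>
                       \<exists>t. \<forall>i<n. a' i - a i = (if i \<in> J then - t else t)"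
  shows "card A ^ (2 * n) \<le> card Y * Energy n A"
proof -
  let ?X = "{..<n} \<rightarrow>\<^sub>E A"
  have "card A ^ (2 * n) = card ?X ^ 2"
    using assms(1) by (simp add: card_PiE power_mult mult.commute)
  also have "\<dots> \<le> card Y * card {(x, x'). x \<in> ?X \<and> x' \<in> ?X \<and> \<phi> x = \<phi> x'}"
    using assms(1,2) by (intro card_sq_le_card_mult_collisions maps) (simp_all add: finite_PiE)
  also have "\<dots> \<le> card Y * card (shift_pairs J n A)"
  proof (intro mult_le_mono2 card_mono)
    show "{(x, x'). x \<in> ?X \<and> x' \<in> ?X \<and> \<phi> x = \<phi> x'} \<subseteq> shift_pairs J n A"
      using collision unfolding shift_pairs_def by blast
  qed (rule finite_shift_pairs[OF assms(1)])
  also have "\<dots> \<le> card Y * Energy n A"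
    using card_shift_pairs_le[OF assms(1,4)] card_shift_pairs_eq_Energy[OF assms(1,3)] by simp
  finally show ?thesis .
qed

lemma card_power_le_Energy_mult_sigma_k:
  fixes A :: "'a::ab_group_add set"
  assumes "finite A" "k \<ge> 1"
  shows "card A ^ (2 * k) \<le> Energy k A * sigma_k k (diffset A A)"
proof -
  let ?Y = "{x \<in> {..<k} \<rightarrow>\<^sub>E diffset A A. (\<Sum>i<k. x i) = 0}"
  define \<phi> where "\<phi> a = restrict (\<lambda>i. a i - a (Suc i mod k)) {..<k}" for a :: "nat \<Rightarrow> 'a"
  have "card A ^ (2 * k) \<le> card ?Y * Energy k A"
  proof (rule card_power_le_card_mult_Energy[where J = "{}" and \<phi> = \<phi>])
    show "finite ?Y"
      using assms(1) by (simp add: finite_diffset finite_PiE)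
    show "\<phi> ` ({..<k} \<rightarrow>\<^sub>E A) \<subseteq> ?Y"
    proof (rule image_subsetI)
      fix a
      assume a: "a \<in> {..<k} \<rightarrow>\<^sub>E A"
      have "a i - a (Suc i mod k) \<in> diffset A A" if "i < k" for i
      proof -
        have "a i \<in> A" "a (Suc i mod k) \<in> A"
          using PiE_mem[OF a] that assms(2) by simp_all
        then show ?thesis
          unfolding diffset_def by blast
      qed
      moreover have "(\<Sum>i<k. \<phi> a i) = (\<Sum>i<k. a i) - (\<Sum>i<k. a (Suc i mod k))"
        by (simp add: \<phi>_def sum_subtractf)
      ultimately show "\<phi> a \<in> ?Y"
        using sum_lessThan_rotate[OF assms(2), of a] by (simp add: \<phi>_def)
    qed
    fix a a'
    assume eq: "\<phi> a = \<phi> a'"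
    have "a' (Suc i mod k) - a (Suc i mod k) = a' i - a i" if "i < k" for i
    proof -
      have "a i - a (Suc i mod k) = a' i - a' (Suc i mod k)"
        using restrict_eqD[OF eq[unfolded \<phi>_def], of i] that by simp
      then show ?thesis
        by (simp add: algebra_simps)
    qed
    then have "a' i - a i = a' 0 - a 0" if "i < k" for i
      by (rule rotation_invariant_imp_const[where g = "\<lambda>i. a' i - a i", OF _ that])
    then show "\<exists>t. \<forall>i<k. a' i - a i = (if i \<in> {} then - t else t)"
      by (simp only: empty_iff if_False) blast
  qed (use assms in simp_all)
  then show ?thesis
    by (simp add: sigma_k_def mult.commute)
qed

lemma card_power_le_Energy_mult_T_k:
  fixes A :: "'a::ab_group_add set"
  assumes "finite A" "k \<ge> 1"
  shows "card A ^ (4 * k) \<le> Energy (2 * k) A * T_k k (sumset A A)"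
proof -
  let ?S = "{..<k} \<rightarrow>\<^sub>E sumset A A"
  let ?Y = "{(x, y). x \<in> ?S \<and> y \<in> ?S \<and> (\<Sum>i<k. x i) = (\<Sum>i<k. y i)}"
  define \<phi> where "\<phi> a = (restrict (\<lambda>i. a i + a (k + i)) {..<k},
                          restrict (\<lambda>i. a (Suc i mod k) + a (k + i)) {..<k})" for a :: "nat \<Rightarrow> 'a"
  have rot_lt: "Suc i mod k < 2 * k" for i
  proof -
    have "Suc i mod k < k"
      using assms(2) by simp
    then show ?thesis
      by linarith
  qed
  have "card A ^ (2 * (2 * k)) \<le> card ?Y * Energy (2 * k) A"
  proof (rule card_power_le_card_mult_Energy[where J = "{k..<2 * k}" and \<phi> = \<phi>])
    show "finite ?Y"
      by (rule finite_subset[of _ "?S \<times> ?S"])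
        (auto simp: assms(1) finite_sumset intro!: finite_cartesian_product finite_PiE)
    show "\<phi> ` ({..<2 * k} \<rightarrow>\<^sub>E A) \<subseteq> ?Y"
    proof (rule image_subsetI)
      fix a
      assume a: "a \<in> {..<2 * k} \<rightarrow>\<^sub>E A"
      have "a i + a (k + i) \<in> sumset A A \<and> a (Suc i mod k) + a (k + i) \<in> sumset A A" if "i < k" for i
      proof -
        have "a i \<in> A" "a (Suc i mod k) \<in> A" "a (k + i) \<in> A"
          using PiE_mem[OF a] that rot_lt[of i] by simp_all
        then show ?thesis
          unfolding sumset_def by blast
      qed
      moreover have "(\<Sum>i<k. a i + a (k + i)) = (\<Sum>i<k. a (Suc i mod k) + a (k + i))"
        using sum_lessThan_rotate[OF assms(2), of a] by (simp add: sum.distrib)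
      ultimately show "\<phi> a \<in> ?Y"
        by (simp add: \<phi>_def)
    qed
    fix a a'
    assume eq: "\<phi> a = \<phi> a'"
    define g where "g i = a' i - a i" for i
    have g_left: "g i = a (k + i) - a' (k + i)" if "i < k" for i
    proof -
      have "a i + a (k + i) = a' i + a' (k + i)"
        using restrict_eqD[OF conjunct1[OF eq[unfolded \<phi>_def prod.inject]], of i] that by simp
      then show ?thesis
        unfolding g_def by (simp add: algebra_simps)
    qed
    have g_right: "g (Suc i mod k) = a (k + i) - a' (k + i)" if "i < k" for i
    proof -
      have "a (Suc i mod k) + a (k + i) = a' (Suc i mod k) + a' (k + i)"
        using restrict_eqD[OF conjunct2[OF eq[unfolded \<phi>_def prod.inject]], of i] that by simp
      then show ?thesis
        unfolding g_def by (simp add: algebra_simps)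
    qed
    have g_const: "g i = g 0" if "i < k" for i
    proof (rule rotation_invariant_imp_const[OF _ that])
      show "g (Suc i mod k) = g i" if "i < k" for i
        using g_left[OF that] g_right[OF that] by simp
    qed
    show "\<exists>t. \<forall>j<2 * k. a' j - a j = (if j \<in> {k..<2 * k} then - t else t)"
    proof (intro exI allI impI)
      fix j
      assume j: "j < 2 * k"
      show "a' j - a j = (if j \<in> {k..<2 * k} then - g 0 else g 0)"
      proof (cases "j < k")
        case True
        then show ?thesis
          using g_const[OF True] by (simp add: g_def)
      next
        case False
        define i where "i = j - k"
        have i: "i < k" "j = k + i"
          using False j by (simp_all add: i_def)
        have "a (k + i) - a' (k + i) = g 0"
          using g_left[OF i(1)] g_const[OF i(1)] by simp
        then have "a' j - a j = - g 0"
          unfolding i(2) by (metis minus_diff_eq)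
        then show ?thesis
          using False j by simp
      qed
    qed
  qed (use assms in auto)
  then show ?thesis
    by (simp add: T_k_def mult.commute)
qed

lemma card_power_le_Energy_mult_Energy_diffset:
  fixes A :: "'a::ab_group_add set"
  assumes "finite A" "k \<ge> 1"
  shows "card A ^ (2 * k + 4) \<le> Energy (k + 2) A * Energy k (diffset A A)"
proof -
  define \<phi> where "\<phi> a = (restrict (\<lambda>i. a i - a k) {..<k}, restrict (\<lambda>i. a i - a (k + 1)) {..<k})"
    for a :: "nat \<Rightarrow> 'a"
  have "card A ^ (2 * k + 4) = card A ^ (2 * (k + 2))"
    by (rule arg_cong[where f = "\<lambda>n. card A ^ n"]) simp
  also have "\<dots> \<le> card (shift_pairs {} k (diffset A A)) * Energy (k + 2) A"
  proof (rule card_power_le_card_mult_Energy[where J = "{}" and \<phi> = \<phi>])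
    show "\<phi> ` ({..<k + 2} \<rightarrow>\<^sub>E A) \<subseteq> shift_pairs {} k (diffset A A)"
    proof (rule image_subsetI)
      fix a
      assume a: "a \<in> {..<k + 2} \<rightarrow>\<^sub>E A"
      have "a i - a j \<in> diffset A A" if "i < k + 2" "j < k + 2" for i j
        using PiE_mem[OF a] that unfolding diffset_def by blast
      moreover have "\<forall>i<k. (a i - a (k + 1)) - (a i - a k) = a k - a (k + 1)"
        by (simp add: algebra_simps)
      ultimately show "\<phi> a \<in> shift_pairs {} k (diffset A A)"
        unfolding \<phi>_def shift_pairs_def by (auto simp: restrict_PiE_iff)
    qed
    fix a a'
    assume eq: "\<phi> a = \<phi> a'"
    have left: "a' i - a i = a' k - a k" if "i < k" for i
    proof -
      have "a i - a k = a' i - a' k"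
        using restrict_eqD[OF conjunct1[OF eq[unfolded \<phi>_def prod.inject]], of i] that by simp
      then show ?thesis
        by (simp add: algebra_simps)
    qed
    have right: "a' i - a i = a' (k + 1) - a (k + 1)" if "i < k" for i
    proof -
      have "a i - a (k + 1) = a' i - a' (k + 1)"
        using restrict_eqD[OF conjunct2[OF eq[unfolded \<phi>_def prod.inject]], of i] that by simp
      then show ?thesis
        by (simp add: algebra_simps)
    qed
    have "a' i - a i = a' k - a k" if "i < k + 2" for i
    proof (cases "i < k")
      case True
      then show ?thesis
        by (rule left)
    next
      case False
      with that have "i = k \<or> i = k + 1"
        by auto
      moreover have "a' (k + 1) - a (k + 1) = a' k - a k"
        using left[of 0] right[of 0] assms(2) by simp
      ultimately show ?thesis
        by auto
    qed
    then show "\<exists>t. \<forall>i<k + 2. a' i - a i = (if i \<in> {} then - t else t)"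
      by (simp only: empty_iff if_False) blast
  qed (use assms finite_shift_pairs[OF finite_diffset[OF assms(1) assms(1)]] in auto)
  also have "\<dots> = Energy (k + 2) A * Energy k (diffset A A)"
    using card_shift_pairs_eq_Energy[OF finite_diffset[OF assms(1) assms(1)] assms(2)] by simp
  finally show ?thesis .
qed

lemma card_power_le_Energy_mult_Energy_sumset:
  fixes A :: "'a::ab_group_add set"
  assumes "finite A" "k \<ge> 1"
  shows "card A ^ (2 * k + 4) \<le> Energy (k + 2) A * Energy k (sumset A A)"
proof -
  define \<phi> where "\<phi> a = (restrict (\<lambda>i. a i + a k) {..<k}, restrict (\<lambda>i. a i + a (k + 1)) {..<k})"
    for a :: "nat \<Rightarrow> 'a"
  have "card A ^ (2 * k + 4) = card A ^ (2 * (k + 2))"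
    by (rule arg_cong[where f = "\<lambda>n. card A ^ n"]) simp
  also have "\<dots> \<le> card (shift_pairs {} k (sumset A A)) * Energy (k + 2) A"
  proof (rule card_power_le_card_mult_Energy[where J = "{k, k + 1}" and \<phi> = \<phi>])
    show "\<phi> ` ({..<k + 2} \<rightarrow>\<^sub>E A) \<subseteq> shift_pairs {} k (sumset A A)"
    proof (rule image_subsetI)
      fix a
      assume a: "a \<in> {..<k + 2} \<rightarrow>\<^sub>E A"
      have "a i + a j \<in> sumset A A" if "i < k + 2" "j < k + 2" for i j
        using PiE_mem[OF a] that unfolding sumset_def by blast
      moreover have "\<forall>i<k. (a i + a (k + 1)) - (a i + a k) = a (k + 1) - a k"
        by (simp add: algebra_simps)
      ultimately show "\<phi> a \<in> shift_pairs {} k (sumset A A)"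
        unfolding \<phi>_def shift_pairs_def by (auto simp: restrict_PiE_iff)
    qed
    fix a a'
    assume eq: "\<phi> a = \<phi> a'"
    have left: "a' i - a i = a k - a' k" if "i < k" for i
    proof -
      have "a i + a k = a' i + a' k"
        using restrict_eqD[OF conjunct1[OF eq[unfolded \<phi>_def prod.inject]], of i] that by simp
      then show ?thesis
        by (simp add: algebra_simps)
    qed
    have right: "a' i - a i = a (k + 1) - a' (k + 1)" if "i < k" for i
    proof -
      have "a i + a (k + 1) = a' i + a' (k + 1)"
        using restrict_eqD[OF conjunct2[OF eq[unfolded \<phi>_def prod.inject]], of i] that by simp
      then show ?thesis
        by (simp add: algebra_simps)
    qed
    have "a (k + 1) - a' (k + 1) = a k - a' k"
      using left[of 0] right[of 0] assms(2) by simp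
    then have pivots: "a' k - a k = - (a k - a' k)" "a' (k + 1) - a (k + 1) = - (a k - a' k)"
      by (metis minus_diff_eq)+
    have "a' i - a i = (if i \<in> {k, k + 1} then - (a k - a' k) else a k - a' k)" if "i < k + 2" for i
    proof (cases "i < k")
      case True
      then show ?thesis
        using left by simp
    next
      case False
      with that have "i = k \<or> i = k + 1"
        by auto
      then show ?thesis
        using pivots by auto
    qed
    then show "\<exists>t. \<forall>i<k + 2. a' i - a i = (if i \<in> {k, k + 1} then - t else t)"
      by blast
  qed (use assms finite_shift_pairs[OF finite_sumset[OF assms(1) assms(1)]] in auto)
  also have "\<dots> = Energy (k + 2) A * Energy k (sumset A A)"
    using card_shift_pairs_eq_Energy[OF finite_sumset[OF assms(1) assms(1)] assms(2)] by simp
  finally show ?thesis .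
qed

theorem lemma3:
  fixes A :: "'a::ab_group_add set" and k :: nat
  assumes "finite A" and "A \<noteq> {}" and "k \<ge> 1"
  shows "card A ^ (2*k) \<le> Energy k A * sigma_k k (diffset A A)
    \<and> card A ^ (4*k) \<le> Energy (2*k) A * T_k k (sumset A A)
    \<and> card A ^ (2*k+4) \<le> Energy (k+2) A * Energy k (diffset A A)
    \<and> card A ^ (2*k+4) \<le> Energy (k+2) A * Energy k (sumset A A)"
  using card_power_le_Energy_mult_sigma_k[OF assms(1,3)] card_power_le_Energy_mult_T_k[OF assms(1,3)]
    card_power_le_Energy_mult_Energy_diffset[OF assms(1,3)]
    card_power_le_Energy_mult_Energy_sumset[OF assms(1,3)]
  by blast

end
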